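(* Let $\sigma$ be a finite sequence of transitions. Then $\sigma$ is $\omega$-iterable if and only if for every $n\ge 1$ the $n$-fold concatenation $\sigma^n=\sigma\sigma\cdots\sigma$ has an execution (from some valuation).
   Context: Fix a finite set of clocks $X=\{x_0,x_1,\dots,x_m\}$, where $x_0$ is a special reference clock. A valuation is a map $v:X\to\mathbb{R}_{\ge 0}$ with $v(x_0)=0$. For $\delta\ge 0$, $v+\delta$ is the valuation adding $\delta$ to every clock other than $x_0$; for $R\subseteq X\setminus\{x_0\}$, $[R]v$ sets the clocks of $R$ to $0$ and leaves the others unchanged. A guard is a conjunction of atomic constraints $x\sim c$ with $x\in X\setminus\{x_0\}$, $\sim\in\{<,\le,=,\ge,>\}$, $c\in\mathbb{N}$. A transition $t$ is a pair $(g,R)$ of a guard $g$ and a reset set $R\subseteq X\setminus\{x_0\}$ (control states are omitted). We write $v\xrightarrow{t}^{\delta}v'$ if $v+\delta\models g$ and $v'=[R](v+\delta)$. An execution of a sequence $\sigma=t_1\cdots t_k$ is a sequence of valuations $v_0,\dots,v_k$ such that there are $\delta_1,\dots,\delta_k\ge 0$ with $v_{i-1}\xrightarrow{t_i}^{\delta_i}v_i$ for all $i$; we then write $v_0\xrightarrow{\sigma}^{\delta}v_k$ with $\delta=\sum_i\delta_i$, and say $\sigma$ is executable from $v_0$. The sequence $\sigma$ is $\omega$-iterable (from $v_0$) if there are infinite sequences of valuations $v_0,v_1,\dots$ and delays $\delta_1,\delta_2,\dots$ with $v_0\xrightarrow{\sigma}^{\delta_1}v_1\xrightarrow{\sigma}^{\delta_2}v_2\cdots$.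 *)

theory Defs
  imports Complex_Main
begin

text \<open>Clocks are the elements of a finite type 'c; x0 is the special reference clock.
  Valuations map clocks to reals.\<close>

type_synonym 'c valuation = "'c \<Rightarrow> real"

datatype cmp = Lt | Le | Eq | Ge | Gt

type_synonym 'c atom = "'c \<times> cmp \<times> nat"
type_synonym 'c guard = "'c atom list"

type_synonym 'c trans = "'c guard \<times> 'c set"

definition is_val :: "'c \<Rightarrow> 'c valuation \<Rightarrow> bool" where
  "is_val x0 v \<longleftrightarrow> (\<forall>x. v x \<ge> 0) \<and> v x0 = 0"

fun sat_cmp :: "real \<Rightarrow> cmp \<Rightarrow> real \<Rightarrow> bool" where
  "sat_cmp a Lt b = (a < b)"
| "sat_cmp a Le b = (a \<le> b)"
| "sat_cmp a Eq b = (a = b)"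
| "sat_cmp a Ge b = (a \<ge> b)"
| "sat_cmp a Gt b = (a > b)"

definition sat_atom :: "'c valuation \<Rightarrow> 'c atom \<Rightarrow> bool" where
  "sat_atom v a = (case a of (x, r, c) \<Rightarrow> sat_cmp (v x) r (real c))"

definition sat_guard :: "'c valuation \<Rightarrow> 'c guard \<Rightarrow> bool" where
  "sat_guard v g \<longleftrightarrow> (\<forall>a \<in> set g. sat_atom v a)"

definition wf_trans :: "'c \<Rightarrow> 'c trans \<Rightarrow> bool" where
  "wf_trans x0 t \<longleftrightarrow> (\<forall>(x, r, c) \<in> set (fst t). x \<noteq> x0) \<and> snd t \<subseteq> UNIV - {x0}"

definition delay :: "'c \<Rightarrow> 'c valuation \<Rightarrow> real \<Rightarrow> 'c valuation" where
  "delay x0 v d = (\<lambda>x. if x = x0 then v x else v x + d)"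

definition reset :: "'c set \<Rightarrow> 'c valuation \<Rightarrow> 'c valuation" where
  "reset R v = (\<lambda>x. if x \<in> R then 0 else v x)"

definition step :: "'c \<Rightarrow> 'c valuation \<Rightarrow> 'c trans \<Rightarrow> real \<Rightarrow> 'c valuation \<Rightarrow> bool" where
  "step x0 v t d v' \<longleftrightarrow> d \<ge> 0 \<and> sat_guard (delay x0 v d) (fst t) \<and> v' = reset (snd t) (delay x0 v d)"

fun exec :: "'c \<Rightarrow> 'c valuation \<Rightarrow> 'c trans list \<Rightarrow> 'c valuation \<Rightarrow> bool" where
  "exec x0 v [] v' \<longleftrightarrow> v' = v"
| "exec x0 v (t # ts) v' \<longleftrightarrow> (\<exists>d v1. step x0 v t d v1 \<and> exec x0 v1 ts v')"

definition executable :: "'c \<Rightarrow> 'c trans list \<Rightarrow> 'c valuation \<Rightarrow> bool" where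
  "executable x0 \<sigma> v \<longleftrightarrow> (\<exists>v'. exec x0 v \<sigma> v')"

definition omega_iterable :: "'c \<Rightarrow> 'c trans list \<Rightarrow> 'c valuation \<Rightarrow> bool" where
  "omega_iterable x0 \<sigma> v0 \<longleftrightarrow>
     (\<exists>vs :: nat \<Rightarrow> 'c valuation. vs 0 = v0 \<and> (\<forall>i. exec x0 (vs i) \<sigma> (vs (Suc i))))"

end

theory Submission
  imports Defs
begin

text \<open>Call two valuations equivalent if they satisfy the same diagonal constraints x - y < c and
  x - y \<le> c with |c| bounded by the largest constant of the guards. This equivalence has finitely
  many classes and is a simulation for delays, guards and resets, hence for executions of \<sigma>.
  An execution of \<sigma>^n, with n larger than the number of classes, starts two of its \<sigma>-rounds in the
  same class; replaying forever, through the simulation, the rounds between these two visits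
  yields an infinite iteration of \<sigma>.\<close>

lemma exists_between_finite_sets:
  fixes A B :: "real set"
  assumes "finite A" "finite B" "\<forall>a\<in>A. \<forall>b\<in>B. a < b"
  shows "\<exists>x. (\<forall>a\<in>A. a < x) \<and> (\<forall>b\<in>B. x < b)"
proof (cases "A = {}")
  case True
  then show ?thesis
  proof (cases "B = {}")
    case False
    show ?thesis using True False assms
      by (intro exI[of _ "Min B - 1"]) (auto dest: Min_le[OF assms(2)])
  qed auto
next
  case A: False
  show ?thesis
  proof (cases "B = {}")
    case True
    show ?thesis using True A assms
      by (intro exI[of _ "Max A + 1"]) (auto dest: Max_ge[OF assms(1)])
  next
    case False
    have "Max A < Min B" using assms A False Max_in Min_in by blast
    moreover have "\<forall>a\<in>A. a \<le> Max A" "\<forall>b\<in>B. Min B \<le> b" using assms by auto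
    ultimately show ?thesis
      by (intro exI[of _ "(Max A + Min B) / 2"]) fastforce
  qed
qed

lemma interpolate_point:
  fixes p q :: "'i \<Rightarrow> real"
  assumes fin: "finite I"
    and same_order: "\<forall>i\<in>I. \<forall>j\<in>I. (p i < p j \<longleftrightarrow> q i < q j) \<and> (p i \<le> p j \<longleftrightarrow> q i \<le> q j)"
  shows "\<exists>d'. \<forall>i\<in>I. (d < p i \<longleftrightarrow> d' < q i) \<and> (d \<le> p i \<longleftrightarrow> d' \<le> q i)"
proof (cases "\<exists>k\<in>I. p k = d")
  case True
  then obtain k where k: "k \<in> I" "p k = d" by blast
  then have "\<forall>i\<in>I. (d < p i \<longleftrightarrow> q k < q i) \<and> (d \<le> p i \<longleftrightarrow> q k \<le> q i)"
    using same_order by metis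
  then show ?thesis by blast
next
  case False
  let ?below = "q ` {i\<in>I. p i < d}" and ?above = "q ` {i\<in>I. d < p i}"
  have "\<forall>a\<in>?below. \<forall>b\<in>?above. a < b"
  proof (intro ballI)
    fix a b assume "a \<in> ?below" "b \<in> ?above"
    then obtain i j where "i \<in> I" "j \<in> I" "p i < p j" "a = q i" "b = q j" by force
    then show "a < b" using same_order by blast
  qed
  moreover have "finite ?below" "finite ?above" using fin by auto
  ultimately obtain x where x: "\<forall>a\<in>?below. a < x" "\<forall>b\<in>?above. x < b"
    using exists_between_finite_sets by meson
  have "(d < p i \<longleftrightarrow> x < q i) \<and> (d \<le> p i \<longleftrightarrow> x \<le> q i)" if "i \<in> I" for i
  proof -
    have "p i \<noteq> d" using False that by blast
    then consider "p i < d" | "d < p i" by linarith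
    then show ?thesis
    proof cases
      case 1
      then have "q i < x" using x(1) that by blast
      with 1 show ?thesis by linarith
    next
      case 2
      then have "x < q i" using x(2) that by blast
      with 2 show ?thesis by linarith
    qed
  qed
  then show ?thesis by blast
qed

lemma infinite_path_of_class_cycle:
  fixes R :: "'a \<Rightarrow> 'a \<Rightarrow> bool" and cls :: "'a \<Rightarrow> 'b"
  assumes sim: "\<And>v w v'. P v \<Longrightarrow> P w \<Longrightarrow> cls v = cls w \<Longrightarrow> R v v' \<Longrightarrow> \<exists>w'. R w w' \<and> cls w' = cls v'"
    and closed: "\<And>v v'. P v \<Longrightarrow> R v v' \<Longrightarrow> P v'"
    and edges: "\<And>m. \<exists>v v'. P v \<and> cls v = c m \<and> R v v' \<and> cls v' = c (Suc m)"
  shows "\<exists>vs. P (vs 0) \<and> (\<forall>i. R (vs i) (vs (Suc i)))"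
proof -
  have "\<exists>vs. \<forall>m. (P (vs m) \<and> cls (vs m) = c m) \<and> R (vs m) (vs (Suc m))"
  proof (rule dependent_nat_choice)
    show "\<exists>v. P v \<and> cls v = c 0" using edges[of 0] by blast
  next
    fix v m assume v: "P v \<and> cls v = c m"
    obtain u u' where u: "P u" "cls u = c m" "R u u'" "cls u' = c (Suc m)"
      using edges by blast
    with v sim obtain v' where "R v v'" "cls v' = c (Suc m)" by metis
    with v closed show "\<exists>v'. (P v' \<and> cls v' = c (Suc m)) \<and> R v v'" by blast
  qed
  then show ?thesis by blast
qed

lemma infinite_path_of_long_path:
  fixes R :: "'a \<Rightarrow> 'a \<Rightarrow> bool" and cls :: "'a \<Rightarrow> 'b"
  assumes fin: "finite (cls ` Collect P)"
    and sim: "\<And>v w v'. P v \<Longrightarrow> P w \<Longrightarrow> cls v = cls w \<Longrightarrow> R v v' \<Longrightarrow> \<exists>w'. R w w' \<and> cls w' = cls v'"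
    and closed: "\<And>v v'. P v \<Longrightarrow> R v v' \<Longrightarrow> P v'"
    and path: "P (u 0)" "\<forall>i<n. R (u i) (u (Suc i))"
    and long: "card (cls ` Collect P) \<le> n"
  shows "\<exists>vs. P (vs 0) \<and> (\<forall>i. R (vs i) (vs (Suc i)))"
proof -
  have P_u: "P (u i)" if "i \<le> n" for i
    using that
  proof (induction i)
    case (Suc i)
    then show ?case using closed path(2) by simp
  qed (use path(1) in simp)
  have "(cls \<circ> u) ` {0..n} \<subseteq> cls ` Collect P" using P_u by auto
  then have "card ((cls \<circ> u) ` {0..n}) \<le> card (cls ` Collect P)"
    using fin by (rule card_mono[rotated])
  then have "card ((cls \<circ> u) ` {0..n}) < card {0..n}" using long by simp
  then obtain i j where ij: "i < j" "j \<le> n" "cls (u i) = cls (u j)"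
    using pigeonhole unfolding inj_on_def
    by (metis atLeastAtMost_iff comp_apply linorder_neqE_nat)
  define p where "p = j - i"
  define c where "c m = cls (u (i + m mod p))" for m
  have edges: "\<exists>v v'. P v \<and> cls v = c m \<and> R v v' \<and> cls v' = c (Suc m)" for m
  proof (intro exI conjI)
    let ?k = "i + m mod p"
    have "m mod p < p" using ij by (simp add: p_def)
    then have "?k < j" by (simp add: p_def)
    then show "P (u ?k)" "R (u ?k) (u (Suc ?k))" using P_u path ij by auto
    show "cls (u ?k) = c m" by (simp add: c_def)
    show "cls (u (Suc ?k)) = c (Suc m)"
    proof (cases "Suc (m mod p) = p")
      case True
      then have "Suc ?k = j" "Suc m mod p = 0" using ij by (auto simp: p_def mod_Suc)
      then show ?thesis using ij by (simp add: c_def)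
    next
      case False
      then show ?thesis by (simp add: c_def mod_Suc)
    qed
  qed
  from sim closed edges show ?thesis by (rule infinite_path_of_class_cycle)
qed

definition clock_equiv :: "nat \<Rightarrow> 'c valuation \<Rightarrow> 'c valuation \<Rightarrow> bool" where
  "clock_equiv L v w \<longleftrightarrow> (\<forall>x y (c::int). \<bar>c\<bar> \<le> int L \<longrightarrow>
      (v x - v y < real_of_int c \<longleftrightarrow> w x - w y < real_of_int c) \<and>
      (v x - v y \<le> real_of_int c \<longleftrightarrow> w x - w y \<le> real_of_int c))"

definition diag_constraints :: "nat \<Rightarrow> 'c valuation \<Rightarrow> ('c \<times> 'c \<times> int \<times> bool) set" where
  "diag_constraints L v = {(x, y, c, strict). \<bar>c\<bar> \<le> int L \<and>
      (if strict then v x - v y < real_of_int c else v x - v y \<le> real_of_int c)}"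

lemma clock_equiv_iff_diag_constraints_eq:
  fixes v w :: "'c valuation"
  shows "clock_equiv L v w \<longleftrightarrow> diag_constraints L v = diag_constraints L w"
proof
  assume equiv: "clock_equiv L v w"
  show "diag_constraints L v = diag_constraints L w"
  proof (intro set_eqI)
    fix k :: "'c \<times> 'c \<times> int \<times> bool"
    obtain x y c strict where k: "k = (x, y, c, strict)" by (cases k) auto
    have "\<bar>c\<bar> \<le> int L \<longrightarrow> (v x - v y < real_of_int c \<longleftrightarrow> w x - w y < real_of_int c) \<and>
        (v x - v y \<le> real_of_int c \<longleftrightarrow> w x - w y \<le> real_of_int c)"
      using equiv unfolding clock_equiv_def by blast
    then show "k \<in> diag_constraints L v \<longleftrightarrow> k \<in> diag_constraints L w"
      unfolding k diag_constraints_def by auto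
  qed
next
  assume eq: "diag_constraints L v = diag_constraints L w"
  show "clock_equiv L v w" unfolding clock_equiv_def
  proof (intro allI impI)
    fix x y and c :: int assume c: "\<bar>c\<bar> \<le> int L"
    have "(x, y, c, strict) \<in> diag_constraints L v \<longleftrightarrow> (x, y, c, strict) \<in> diag_constraints L w"
      for strict using eq by simp
    from this[of True] this[of False] c
    show "(v x - v y < real_of_int c \<longleftrightarrow> w x - w y < real_of_int c) \<and>
        (v x - v y \<le> real_of_int c \<longleftrightarrow> w x - w y \<le> real_of_int c)"
      unfolding diag_constraints_def by simp
  qed
qed

lemma finite_range_diag_constraints:
  "finite (range (diag_constraints L :: ('c::finite) valuation \<Rightarrow> _))"
proof (rule finite_subset)
  show "range (diag_constraints L :: 'c valuation \<Rightarrow> _) \<subseteq> Pow (UNIV \<times> UNIV \<times> {-int L..int L} \<times> UNIV)"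
    unfolding diag_constraints_def by auto
qed simp

lemma clock_equiv_delayI:
  assumes equiv: "clock_equiv L v w" and "v x0 = 0" "w x0 = 0"
    and clocks: "\<And>x c. \<bar>c\<bar> \<le> int L \<Longrightarrow>
      (v x + d < real_of_int c \<longleftrightarrow> w x + d' < real_of_int c) \<and>
      (v x + d \<le> real_of_int c \<longleftrightarrow> w x + d' \<le> real_of_int c)"
  shows "clock_equiv L (delay x0 v d) (delay x0 w d')"
  unfolding clock_equiv_def
proof (intro allI impI)
  fix x y and c :: int assume c: "\<bar>c\<bar> \<le> int L"
  let ?v = "delay x0 v d" and ?w = "delay x0 w d'"
  show "(?v x - ?v y < real_of_int c \<longleftrightarrow> ?w x - ?w y < real_of_int c) \<and>
      (?v x - ?v y \<le> real_of_int c \<longleftrightarrow> ?w x - ?w y \<le> real_of_int c)"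
  proof (cases "x = x0"; cases "y = x0")
    assume "x = x0" "y \<noteq> x0"
    moreover have "\<bar>- c\<bar> \<le> int L" using c by simp
    ultimately show ?thesis using clocks[of "- c" y] assms(2,3) by (auto simp: delay_def)
  next
    assume "x \<noteq> x0" "y = x0"
    then show ?thesis using clocks[OF c, of x] assms(2,3) by (simp add: delay_def)
  next
    assume "x \<noteq> x0" "y \<noteq> x0"
    then show ?thesis using equiv c unfolding clock_equiv_def by (simp add: delay_def)
  qed (simp add: delay_def)
qed

lemma delay_simulation:
  fixes x0 :: "'c::finite"
  assumes "is_val x0 v" "is_val x0 w" and equiv: "clock_equiv L v w" and "0 \<le> d"
  shows "\<exists>d'\<ge>0. clock_equiv L (delay x0 v d) (delay x0 w d')"
proof -
  have v: "v x0 = 0" "\<And>x. 0 \<le> v x" and w: "w x0 = 0" "\<And>x. 0 \<le> w x"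
    using assms(1,2) unfolding is_val_def by auto
  \<comment> \<open>d' is chosen to lie among the delays c - w x exactly as d lies among the delays c - v x.\<close>
  define I where "I = {(x, c). c \<in> {0..int L} \<and> v x \<le> real_of_int c}"
  have "finite I"
    by (rule finite_subset[of _ "UNIV \<times> {0..int L}"]) (auto simp: I_def)
  define p where "p = (\<lambda>(x, c). real_of_int c - v x)"
  define q where "q = (\<lambda>(x, c). real_of_int c - w x)"
  have "\<forall>i\<in>I. \<forall>j\<in>I. (p i < p j \<longleftrightarrow> q i < q j) \<and> (p i \<le> p j \<longleftrightarrow> q i \<le> q j)"
  proof (intro ballI)
    fix i j assume "i \<in> I" "j \<in> I"
    then obtain x c y c' where ij: "i = (x, c)" "j = (y, c')" "\<bar>c' - c\<bar> \<le> int L"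
      unfolding I_def by auto
    then have "(v y - v x < real_of_int (c' - c) \<longleftrightarrow> w y - w x < real_of_int (c' - c)) \<and>
        (v y - v x \<le> real_of_int (c' - c) \<longleftrightarrow> w y - w x \<le> real_of_int (c' - c))"
      using equiv unfolding clock_equiv_def by blast
    then show "(p i < p j \<longleftrightarrow> q i < q j) \<and> (p i \<le> p j \<longleftrightarrow> q i \<le> q j)"
      unfolding ij p_def q_def by (auto simp: algebra_simps)
  qed
  then obtain d' where d': "\<forall>i\<in>I. (d < p i \<longleftrightarrow> d' < q i) \<and> (d \<le> p i \<longleftrightarrow> d' \<le> q i)"
    using interpolate_point[OF \<open>finite I\<close>] by blast
  have "(x0, 0) \<in> I" using v by (simp add: I_def)
  then have "0 \<le> d'" using d' \<open>0 \<le> d\<close> v w by (force simp: p_def q_def)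
  have "(v x + d < real_of_int c \<longleftrightarrow> w x + d' < real_of_int c) \<and>
      (v x + d \<le> real_of_int c \<longleftrightarrow> w x + d' \<le> real_of_int c)" if "\<bar>c\<bar> \<le> int L" for x c
  proof (cases "v x \<le> real_of_int c")
    case True
    with v(2)[of x] that have "(x, c) \<in> I" by (simp add: I_def)
    then show ?thesis using d' by (auto simp: p_def q_def algebra_simps)
  next
    case False
    moreover have "v x - v x0 \<le> real_of_int c \<longleftrightarrow> w x - w x0 \<le> real_of_int c"
      using equiv that unfolding clock_equiv_def by blast
    ultimately show ?thesis using v w \<open>0 \<le> d\<close> \<open>0 \<le> d'\<close> by auto
  qed
  then show ?thesis using clock_equiv_delayI[OF equiv v(1) w(1)] \<open>0 \<le> d'\<close> by blast
qed

lemma reset_eq_comp: "v x0 = 0 \<Longrightarrow> x0 \<notin> R \<Longrightarrow> reset R v = v \<circ> (\<lambda>x. if x \<in> R then x0 else x)"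
  by (auto simp: reset_def)

lemma clock_equiv_reset:
  assumes "clock_equiv L v w" "v x0 = 0" "w x0 = 0" "x0 \<notin> R"
  shows "clock_equiv L (reset R v) (reset R w)"
  using assms unfolding reset_eq_comp[of v, OF assms(2,4)] reset_eq_comp[of w, OF assms(3,4)] clock_equiv_def
  by simp

definition bounded_trans :: "nat \<Rightarrow> 'c trans \<Rightarrow> bool" where
  "bounded_trans L t \<longleftrightarrow> (\<forall>(x, r, c) \<in> set (fst t). c \<le> L)"

lemma sat_guard_clock_equiv:
  assumes equiv: "clock_equiv L v w" and "v x0 = 0" "w x0 = 0"
    and g: "\<forall>(x, r, c) \<in> set g. x \<noteq> x0 \<and> c \<le> L"
  shows "sat_guard v g \<longleftrightarrow> sat_guard w g"
proof -
  have "sat_atom v (x, r, c) \<longleftrightarrow> sat_atom w (x, r, c)" if "(x, r, c) \<in> set g" for x r c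
  proof -
    have "\<bar>int c\<bar> \<le> int L" using g that by auto
    then have "(v x - v x0 < real_of_int (int c) \<longleftrightarrow> w x - w x0 < real_of_int (int c)) \<and>
        (v x - v x0 \<le> real_of_int (int c) \<longleftrightarrow> w x - w x0 \<le> real_of_int (int c))"
      using equiv unfolding clock_equiv_def by blast
    then show ?thesis using assms(2,3) unfolding sat_atom_def by (cases r) auto
  qed
  then show ?thesis unfolding sat_guard_def by auto
qed

lemma is_val_step: "is_val x0 v \<Longrightarrow> wf_trans x0 t \<Longrightarrow> step x0 v t d v' \<Longrightarrow> is_val x0 v'"
  unfolding step_def wf_trans_def is_val_def reset_def delay_def by auto

lemma is_val_exec:
  "\<forall>t \<in> set ts. wf_trans x0 t \<Longrightarrow> is_val x0 v \<Longrightarrow> exec x0 v ts v' \<Longrightarrow> is_val x0 v'"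
  by (induction ts arbitrary: v) (auto dest: is_val_step)

lemma step_simulation:
  fixes x0 :: "'c::finite"
  assumes "is_val x0 v" "is_val x0 w" "clock_equiv L v w"
    and "wf_trans x0 t" "bounded_trans L t" and step: "step x0 v t d v'"
  shows "\<exists>d' w'. step x0 w t d' w' \<and> clock_equiv L v' w'"
proof -
  have "0 \<le> d" using step unfolding step_def by simp
  then obtain d' where "0 \<le> d'" and delayed: "clock_equiv L (delay x0 v d) (delay x0 w d')"
    using delay_simulation[OF assms(1-3)] by blast
  have zero: "delay x0 v d x0 = 0" "delay x0 w d' x0 = 0"
    using assms(1,2) unfolding is_val_def delay_def by auto
  have "\<forall>(x, r, c) \<in> set (fst t). x \<noteq> x0 \<and> c \<le> L" and "x0 \<notin> snd t"
    using assms(4,5) unfolding wf_trans_def bounded_trans_def by auto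
  then have "sat_guard (delay x0 w d') (fst t)"
    and "clock_equiv L v' (reset (snd t) (delay x0 w d'))"
    using sat_guard_clock_equiv[OF delayed zero] clock_equiv_reset[OF delayed zero] step
    unfolding step_def by auto
  with \<open>0 \<le> d'\<close> show ?thesis unfolding step_def by blast
qed

lemma exec_simulation:
  fixes x0 :: "'c::finite"
  assumes "\<forall>t \<in> set ts. wf_trans x0 t \<and> bounded_trans L t"
    and "is_val x0 v" "is_val x0 w" "clock_equiv L v w" "exec x0 v ts v'"
  shows "\<exists>w'. exec x0 w ts w' \<and> clock_equiv L v' w'"
  using assms
proof (induction ts arbitrary: v w)
  case (Cons t ts)
  then obtain d v1 where step: "step x0 v t d v1" and rest: "exec x0 v1 ts v'" by auto
  moreover have "wf_trans x0 t" "bounded_trans L t" using Cons.prems(1) by auto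
  ultimately obtain d' w1 where step': "step x0 w t d' w1" and "clock_equiv L v1 w1"
    using step_simulation[OF Cons.prems(2-4)] by blast
  moreover have "is_val x0 v1" "is_val x0 w1"
    using Cons.prems step step' by (auto intro: is_val_step)
  ultimately obtain w' where "exec x0 w1 ts w'" "clock_equiv L v' w'"
    using Cons.IH[of v1 w1] Cons.prems(1) rest by auto
  with step' show ?case by auto
qed simp

lemma exec_simulation_diag_constraints:
  fixes x0 :: "'c::finite"
  assumes "\<forall>t \<in> set ts. wf_trans x0 t \<and> bounded_trans L t"
    and "is_val x0 v" "is_val x0 w" "diag_constraints L v = diag_constraints L w" "exec x0 v ts v'"
  shows "\<exists>w'. exec x0 w ts w' \<and> diag_constraints L w' = diag_constraints L v'"
  using exec_simulation[OF assms(1-3) _ assms(5)] assms(4)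
  by (auto simp: clock_equiv_iff_diag_constraints_eq)

lemma exec_append:
  "exec x0 v (xs @ ys) v'' \<longleftrightarrow> (\<exists>v'. exec x0 v xs v' \<and> exec x0 v' ys v'')"
  by (induction xs arbitrary: v) auto

lemma exec_concat_replicate_iff:
  "exec x0 v (concat (replicate n \<sigma>)) v' \<longleftrightarrow>
    (\<exists>u. u 0 = v \<and> u n = v' \<and> (\<forall>i<n. exec x0 (u i) \<sigma> (u (Suc i))))"
proof (induction n arbitrary: v)
  case 0
  show ?case by auto
next
  case (Suc n)
  show ?case
  proof
    assume "exec x0 v (concat (replicate (Suc n) \<sigma>)) v'"
    then obtain v1 where "exec x0 v \<sigma> v1" "exec x0 v1 (concat (replicate n \<sigma>)) v'"
      by (auto simp: exec_append)
    moreover from this(2) obtain u where "u 0 = v1" "u n = v'"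
        "\<forall>i<n. exec x0 (u i) \<sigma> (u (Suc i))"
      using Suc.IH by blast
    ultimately have "\<forall>i<Suc n. exec x0 (case_nat v u i) \<sigma> (case_nat v u (Suc i))"
      by (simp add: All_less_Suc2)
    with \<open>u n = v'\<close> show "\<exists>u. u 0 = v \<and> u (Suc n) = v' \<and> (\<forall>i<Suc n. exec x0 (u i) \<sigma> (u (Suc i)))"
      by (intro exI[of _ "case_nat v u"]) simp
  next
    assume "\<exists>u. u 0 = v \<and> u (Suc n) = v' \<and> (\<forall>i<Suc n. exec x0 (u i) \<sigma> (u (Suc i)))"
    then obtain u where "u 0 = v" "u (Suc n) = v'" "\<forall>i<Suc n. exec x0 (u i) \<sigma> (u (Suc i))"
      by blast
    then have "exec x0 v \<sigma> (u 1)" "exec x0 (u 1) (concat (replicate n \<sigma>)) v'"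
      unfolding Suc.IH[of "u 1"] by (auto intro!: exI[of _ "\<lambda>i. u (Suc i)"])
    then show "exec x0 v (concat (replicate (Suc n) \<sigma>)) v'" by (auto simp: exec_append)
  qed
qed

lemma ex_bounded_trans: "\<exists>L. \<forall>t \<in> set \<sigma>. bounded_trans L t"
proof (intro exI ballI)
  fix t assume t: "t \<in> set \<sigma>"
  let ?L = "sum_list (map (snd \<circ> snd) (concat (map fst \<sigma>)))"
  have "c \<le> ?L" if "(x, r, c) \<in> set (fst t)" for x r c
  proof (rule member_le_sum_list)
    show "c \<in> set (map (snd \<circ> snd) (concat (map fst \<sigma>)))"
      using t that by force
  qed simp
  then show "bounded_trans ?L t" unfolding bounded_trans_def by blast
qed

lemma executable_replicate_if_omega_iterable:
  assumes "omega_iterable x0 \<sigma> v0"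
  shows "executable x0 (concat (replicate n \<sigma>)) v0"
proof -
  obtain vs where "vs 0 = v0" "\<forall>i. exec x0 (vs i) \<sigma> (vs (Suc i))"
    using assms unfolding omega_iterable_def by blast
  then have "exec x0 v0 (concat (replicate n \<sigma>)) (vs n)"
    unfolding exec_concat_replicate_iff by blast
  then show ?thesis unfolding executable_def by blast
qed

lemma omega_iterable_if_executable_replicate:
  fixes x0 :: "'c::finite"
  assumes wf: "\<forall>t \<in> set \<sigma>. wf_trans x0 t"
    and executable: "\<forall>n\<ge>1. \<exists>v. is_val x0 v \<and> executable x0 (concat (replicate n \<sigma>)) v"
  shows "\<exists>v0. is_val x0 v0 \<and> omega_iterable x0 \<sigma> v0"
proof -
  obtain L where "\<forall>t \<in> set \<sigma>. bounded_trans L t" using ex_bounded_trans by blast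
  with wf have wf_bounded: "\<forall>t \<in> set \<sigma>. wf_trans x0 t \<and> bounded_trans L t" by blast
  let ?cls = "diag_constraints L :: 'c valuation \<Rightarrow> _"
  let ?n = "Suc (card (?cls ` Collect (is_val x0)))"
  have fin: "finite (?cls ` Collect (is_val x0))"
    using finite_range_diag_constraints by (rule finite_subset[rotated]) blast
  obtain v v' where "is_val x0 v" "exec x0 v (concat (replicate ?n \<sigma>)) v'"
    using executable[rule_format, of ?n] unfolding executable_def by auto
  then obtain u where "is_val x0 (u 0)" and path: "\<forall>i<?n. exec x0 (u i) \<sigma> (u (Suc i))"
    unfolding exec_concat_replicate_iff by blast
  have "\<exists>vs. is_val x0 (vs 0) \<and> (\<forall>i. exec x0 (vs i) \<sigma> (vs (Suc i)))"
  proof (intro infinite_path_of_long_path[where P = "is_val x0" and R = "\<lambda>v v'. exec x0 v \<sigma> v'"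
        and cls = ?cls and u = u and n = ?n])
    show "\<exists>v'. exec x0 v \<sigma> v' \<and> ?cls v' = ?cls w'"
      if "is_val x0 w" "is_val x0 v" "?cls w = ?cls v" "exec x0 w \<sigma> w'" for w v w'
      using exec_simulation_diag_constraints[OF wf_bounded that] .
  qed (use fin \<open>is_val x0 (u 0)\<close> path is_val_exec[OF wf] in simp_all)
  then show ?thesis unfolding omega_iterable_def by blast
qed

theorem lemma1:
  fixes x0 :: "'c::finite" and \<sigma> :: "'c trans list"
  assumes "\<forall>t \<in> set \<sigma>. wf_trans x0 t"
  shows "(\<exists>v0. is_val x0 v0 \<and> omega_iterable x0 \<sigma> v0) \<longleftrightarrow>
         (\<forall>n::nat. n \<ge> 1 \<longrightarrow> (\<exists>v. is_val x0 v \<and> executable x0 (concat (replicate n \<sigma>)) v))"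
proof
  assume "\<exists>v0. is_val x0 v0 \<and> omega_iterable x0 \<sigma> v0"
  then obtain v0 where "is_val x0 v0" "omega_iterable x0 \<sigma> v0" by blast
  then show "\<forall>n\<ge>1. \<exists>v. is_val x0 v \<and> executable x0 (concat (replicate n \<sigma>)) v"
    using executable_replicate_if_omega_iterable[of x0 \<sigma> v0] by blast
qed (rule omega_iterable_if_executable_replicate[OF assms])

end
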